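(* Let $G$ be a connected graph of order $n(G)\ge 2$. The following statements are equivalent. (i) $\mu_t(G)=n(G)-\operatorname{diam}(G)+1$. (ii) There exists a diametral path $x_0,x_1,\dots,x_k$ in $G$ (that is, a shortest path with $k=\operatorname{diam}(G)$) such that for every pair $u,v$ of vertices of $G$ there exists a shortest $u,v$-path $u=y_0,y_1,\dots,y_{k'}=v$ with $\{y_1,\dots,y_{k'-1}\}\subseteq\{x_1,\dots,x_{k-1}\}$.
   Context: All graphs are finite, simple and undirected; $n(G)$ denotes the order of $G$ and $\operatorname{diam}(G)$ its diameter. Let $G$ be a connected graph and $X\subseteq V(G)$. Two vertices $x,y\in V(G)$ are $X$-visible if there exists a shortest $x,y$-path in $G$ none of whose internal vertices (i.e., vertices other than $x$ and $y$) belongs to $X$. The set $X$ is a total mutual-visibility set of $G$ if every two vertices of $G$ are $X$-visible (the empty set is allowed). The total mutual-visibility number $\mu_t(G)$ is the maximum cardinality of a total mutual-visibility set of $G$. *)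

theory Defs
  imports Main
begin

definition simple_graph :: "'a set \<Rightarrow> ('a \<Rightarrow> 'a \<Rightarrow> bool) \<Rightarrow> bool" where
  "simple_graph V E \<longleftrightarrow> finite V \<and> (\<forall>x y. E x y \<longrightarrow> x \<in> V \<and> y \<in> V)
     \<and> (\<forall>x y. E x y \<longrightarrow> E y x) \<and> (\<forall>x. \<not> E x x)"

definition walk :: "'a set \<Rightarrow> ('a \<Rightarrow> 'a \<Rightarrow> bool) \<Rightarrow> 'a list \<Rightarrow> bool" where
  "walk V E xs \<longleftrightarrow> xs \<noteq> [] \<and> set xs \<subseteq> V \<and>
     (\<forall>i. Suc i < length xs \<longrightarrow> E (xs ! i) (xs ! Suc i))"

definition walk_betw :: "'a set \<Rightarrow> ('a \<Rightarrow> 'a \<Rightarrow> bool) \<Rightarrow> 'a \<Rightarrow> 'a list \<Rightarrow> 'a \<Rightarrow> bool" where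
  "walk_betw V E u xs v \<longleftrightarrow> walk V E xs \<and> hd xs = u \<and> last xs = v"

definition connected_graph :: "'a set \<Rightarrow> ('a \<Rightarrow> 'a \<Rightarrow> bool) \<Rightarrow> bool" where
  "connected_graph V E \<longleftrightarrow> simple_graph V E \<and> V \<noteq> {} \<and>
     (\<forall>u\<in>V. \<forall>v\<in>V. \<exists>xs. walk_betw V E u xs v)"

definition gdist :: "'a set \<Rightarrow> ('a \<Rightarrow> 'a \<Rightarrow> bool) \<Rightarrow> 'a \<Rightarrow> 'a \<Rightarrow> nat" where
  "gdist V E u v = (LEAST n. \<exists>xs. walk_betw V E u xs v \<and> length xs = Suc n)"

definition shortest_path :: "'a set \<Rightarrow> ('a \<Rightarrow> 'a \<Rightarrow> bool) \<Rightarrow> 'a \<Rightarrow> 'a list \<Rightarrow> 'a \<Rightarrow> bool" where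
  "shortest_path V E u xs v \<longleftrightarrow> walk_betw V E u xs v \<and> length xs = Suc (gdist V E u v)"

definition diam :: "'a set \<Rightarrow> ('a \<Rightarrow> 'a \<Rightarrow> bool) \<Rightarrow> nat" where
  "diam V E = Max {gdist V E u v | u v. u \<in> V \<and> v \<in> V}"

definition internal :: "'a list \<Rightarrow> 'a set" where
  "internal xs = set (butlast (tl xs))"

definition X_visible :: "'a set \<Rightarrow> ('a \<Rightarrow> 'a \<Rightarrow> bool) \<Rightarrow> 'a set \<Rightarrow> 'a \<Rightarrow> 'a \<Rightarrow> bool" where
  "X_visible V E X x y \<longleftrightarrow> (\<exists>xs. shortest_path V E x xs y \<and> internal xs \<inter> X = {})"

definition total_mutual_visibility_set :: "'a set \<Rightarrow> ('a \<Rightarrow> 'a \<Rightarrow> bool) \<Rightarrow> 'a set \<Rightarrow> bool" where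
  "total_mutual_visibility_set V E X \<longleftrightarrow> X \<subseteq> V \<and> (\<forall>x\<in>V. \<forall>y\<in>V. X_visible V E X x y)"

definition mu_t :: "'a set \<Rightarrow> ('a \<Rightarrow> 'a \<Rightarrow> bool) \<Rightarrow> nat" where
  "mu_t V E = Max {card X | X. total_mutual_visibility_set V E X}"

end

theory Submission
  imports Defs
begin

text \<open>A shortest path between two vertices at distance \<open>diam\<close> has \<open>diam - 1\<close> internal vertices,
and a total mutual-visibility set must avoid the internal vertices of at least one such path,
so \<open>\<mu>\<^sub>t \<le> n - diam + 1\<close>. Equality forces an extremal set to be exactly the complement of
the interior of a diametral path, and that complement is total mutual-visibility precisely when
every pair of vertices has a shortest path whose interior lies inside the diametral path.\<close>

lemma connected_graph_finite: "connected_graph V E \<Longrightarrow> finite V"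
  by (simp add: connected_graph_def simple_graph_def)

lemma successively_conv_nth:
  "successively P xs \<longleftrightarrow> (\<forall>i. Suc i < length xs \<longrightarrow> P (xs ! i) (xs ! Suc i))"
proof (induction P xs rule: successively.induct)
  case (3 P x y xs)
  then show ?case by (auto simp: nth_Cons split: nat.split)
qed auto

lemma walk_iff_successively:
  "walk V E xs \<longleftrightarrow> xs \<noteq> [] \<and> set xs \<subseteq> V \<and> successively E xs"
  by (simp add: walk_def successively_conv_nth)

lemma walk_betw_shortcut:
  assumes "walk_betw V E u (as @ [x] @ bs @ [x] @ cs) v"
  shows "walk_betw V E u (as @ [x] @ cs) v"
proof -
  have "successively E (as @ [x] @ cs)" if "successively E (as @ [x] @ bs @ [x] @ cs)"
  proof -
    have "successively E (as @ [x])" "successively E (x # cs)"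
      using that successively_append_iff[of E "as @ [x]" "bs @ x # cs"]
        successively_append_iff[of E "as @ x # bs" "x # cs"] by auto
    then show ?thesis by (auto simp: successively_append_iff)
  qed
  then show ?thesis
    using assms by (cases as) (auto simp: walk_betw_def walk_iff_successively)
qed

lemma shortest_path_set_subset:
  "shortest_path V E u xs v \<Longrightarrow> set xs \<subseteq> V"
  by (simp add: shortest_path_def walk_betw_def walk_def)

lemma gdist_le_walk_length:
  assumes "walk_betw V E u xs v"
  shows "Suc (gdist V E u v) \<le> length xs"
proof -
  obtain n where n: "length xs = Suc n"
    using assms by (cases xs) (auto simp: walk_betw_def walk_def)
  have "gdist V E u v \<le> n"
    unfolding gdist_def by (rule Least_le) (use assms n in blast)
  then show ?thesis using n by simp
qed

lemma shortest_path_exists: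
  assumes "connected_graph V E" "u \<in> V" "v \<in> V"
  shows "\<exists>xs. shortest_path V E u xs v"
proof -
  obtain xs where "walk_betw V E u xs v"
    using assms unfolding connected_graph_def by blast
  moreover have "length xs = Suc (length xs - 1)"
    using calculation by (cases xs) (auto simp: walk_betw_def walk_def)
  ultimately have "\<exists>n xs. walk_betw V E u xs v \<and> length xs = Suc n"
    by blast
  then have "\<exists>xs. walk_betw V E u xs v \<and> length xs = Suc (gdist V E u v)"
    unfolding gdist_def by (rule LeastI_ex)
  then show ?thesis unfolding shortest_path_def by blast
qed

lemma shortest_path_distinct:
  assumes "shortest_path V E u xs v"
  shows "distinct xs"
proof (rule ccontr)
  assume "\<not> distinct xs"
  then obtain as x bs cs where xs: "xs = as @ [x] @ bs @ [x] @ cs"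
    using not_distinct_decomp by blast
  then have "walk_betw V E u (as @ [x] @ cs) v"
    using assms by (intro walk_betw_shortcut[of V E u as x bs cs v]) (simp add: shortest_path_def)
  then have "Suc (gdist V E u v) \<le> length (as @ [x] @ cs)"
    by (rule gdist_le_walk_length)
  then show False using assms xs by (simp add: shortest_path_def)
qed

lemma shortest_path_length_le_card:
  assumes "shortest_path V E u xs v" "finite V"
  shows "length xs \<le> card V"
proof -
  have "length xs = card (set xs)"
    using distinct_card[OF shortest_path_distinct[OF assms(1)]] by simp
  also have "\<dots> \<le> card V"
    using card_mono[OF assms(2) shortest_path_set_subset[OF assms(1)]] .
  finally show ?thesis .
qed

lemma gdist_eq_0_imp_eq:
  assumes "connected_graph V E" "u \<in> V" "v \<in> V" "gdist V E u v = 0"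
  shows "u = v"
proof -
  obtain xs where "shortest_path V E u xs v"
    using shortest_path_exists[OF assms(1-3)] by blast
  then have "length xs = 1"
    using assms(4) by (simp add: shortest_path_def)
  then obtain w where "xs = [w]"
    by (auto simp: length_Suc_conv)
  then show ?thesis
    using \<open>shortest_path V E u xs v\<close> by (auto simp: shortest_path_def walk_betw_def)
qed

lemma internal_subset_set: "internal xs \<subseteq> set xs"
  unfolding internal_def by (cases xs) (auto dest: in_set_butlastD)

lemma card_internal:
  "distinct xs \<Longrightarrow> card (internal xs) = length xs - 2"
  unfolding internal_def by (simp add: distinct_card distinct_butlast distinct_tl)

lemma card_Diff_internal_shortest_path:
  assumes "shortest_path V E u xs v" "finite V" "2 \<le> length xs"
  shows "card (V - internal xs) + length xs = card V + 2"
proof -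
  have "internal xs \<subseteq> V"
    using internal_subset_set[of xs] shortest_path_set_subset[OF assms(1)] by (rule order_trans)
  then have "card (V - internal xs) = card V - card (internal xs)"
    by (intro card_Diff_subset) (simp_all add: internal_def)
  also have "card (internal xs) = length xs - 2"
    using card_internal[OF shortest_path_distinct[OF assms(1)]] .
  finally show ?thesis
    using shortest_path_length_le_card[OF assms(1,2)] assms(3) by simp
qed

lemma finite_gdist_values:
  "finite V \<Longrightarrow> finite {gdist V E u v | u v. u \<in> V \<and> v \<in> V}"
proof -
  assume "finite V"
  moreover have "{gdist V E u v | u v. u \<in> V \<and> v \<in> V} = (\<lambda>(u, v). gdist V E u v) ` (V \<times> V)"
    by auto
  ultimately show ?thesis by simp
qed

lemma gdist_le_diam:
  assumes "finite V" "u \<in> V" "v \<in> V"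
  shows "gdist V E u v \<le> diam V E"
  unfolding diam_def using assms by (intro Max_ge finite_gdist_values) auto

lemma diam_attained:
  assumes "finite V" "V \<noteq> {}"
  shows "\<exists>u\<in>V. \<exists>v\<in>V. gdist V E u v = diam V E"
proof -
  have "diam V E \<in> {gdist V E u v | u v. u \<in> V \<and> v \<in> V}"
    unfolding diam_def using assms by (intro Max_in finite_gdist_values) auto
  then obtain u v where "u \<in> V" "v \<in> V" "gdist V E u v = diam V E" by auto
  then show ?thesis by blast
qed

lemma diam_pos:
  assumes "connected_graph V E" "2 \<le> card V"
  shows "0 < diam V E"
proof -
  have "finite V" using assms(1) by (rule connected_graph_finite)
  obtain a b where ab: "a \<in> V" "b \<in> V" "a \<noteq> b"
    using assms(2) card_le_Suc0_iff_eq[OF \<open>finite V\<close>] by (metis not_less_eq_eq numeral_2_eq_2)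
  then have "gdist V E a b \<noteq> 0"
    using gdist_eq_0_imp_eq[OF assms(1)] by blast
  then show ?thesis
    using gdist_le_diam[OF \<open>finite V\<close> ab(1,2), of E] by simp
qed

lemma diam_less_card:
  assumes "connected_graph V E"
  shows "diam V E < card V"
proof -
  have "finite V" "V \<noteq> {}" using assms connected_graph_finite by (auto simp: connected_graph_def)
  then obtain u v where "u \<in> V" "v \<in> V" "gdist V E u v = diam V E"
    using diam_attained by blast
  moreover obtain xs where "shortest_path V E u xs v"
    using shortest_path_exists[OF assms \<open>u \<in> V\<close> \<open>v \<in> V\<close>] by blast
  ultimately have "Suc (diam V E) = length xs"
    by (simp add: shortest_path_def)
  then show ?thesis
    using shortest_path_length_le_card[OF \<open>shortest_path V E u xs v\<close> \<open>finite V\<close>] by simp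
qed

lemma total_mutual_visibility_set_empty:
  "connected_graph V E \<Longrightarrow> total_mutual_visibility_set V E {}"
  unfolding total_mutual_visibility_set_def X_visible_def using shortest_path_exists by auto

lemma total_mutual_visibility_set_Diff_iff:
  "total_mutual_visibility_set V E (V - I) \<longleftrightarrow>
     (\<forall>u\<in>V. \<forall>v\<in>V. \<exists>ys. shortest_path V E u ys v \<and> internal ys \<subseteq> I)"
proof -
  have "internal ys \<inter> (V - I) = {} \<longleftrightarrow> internal ys \<subseteq> I" if "shortest_path V E u ys v" for u ys v
    using internal_subset_set[of ys] shortest_path_set_subset[OF that] by blast
  then show ?thesis
    unfolding total_mutual_visibility_set_def X_visible_def by blast
qed

lemma finite_total_mutual_visibility_cards:
  "finite V \<Longrightarrow> finite {card X | X. total_mutual_visibility_set V E X}"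
  by (rule finite_subset[of _ "card ` Pow V"]) (auto simp: total_mutual_visibility_set_def)

lemma card_le_mu_t:
  "finite V \<Longrightarrow> total_mutual_visibility_set V E X \<Longrightarrow> card X \<le> mu_t V E"
  unfolding mu_t_def by (intro Max_ge finite_total_mutual_visibility_cards) auto

lemma mu_t_attained:
  assumes "connected_graph V E"
  shows "\<exists>X. total_mutual_visibility_set V E X \<and> card X = mu_t V E"
proof -
  have "finite V" using assms by (rule connected_graph_finite)
  then have "mu_t V E \<in> {card X | X. total_mutual_visibility_set V E X}"
    unfolding mu_t_def using total_mutual_visibility_set_empty[OF assms]
    by (intro Max_in finite_total_mutual_visibility_cards) auto
  then show ?thesis by auto
qed

lemma total_mutual_visibility_set_avoids_diametral_path:
  assumes "connected_graph V E" "total_mutual_visibility_set V E X"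
  shows "\<exists>u v ys. shortest_path V E u ys v \<and> length ys = Suc (diam V E) \<and> internal ys \<inter> X = {}"
proof -
  have "finite V" "V \<noteq> {}" using assms(1) connected_graph_finite by (auto simp: connected_graph_def)
  then obtain u v where "u \<in> V" "v \<in> V" "gdist V E u v = diam V E"
    using diam_attained by blast
  moreover obtain ys where "shortest_path V E u ys v" "internal ys \<inter> X = {}"
    using assms(2) \<open>u \<in> V\<close> \<open>v \<in> V\<close>
    unfolding total_mutual_visibility_set_def X_visible_def by blast
  ultimately show ?thesis
    by (metis shortest_path_def)
qed

lemma card_total_mutual_visibility_set_le:
  assumes "connected_graph V E" "total_mutual_visibility_set V E X"
  shows "card X + diam V E \<le> card V + 1"
proof -
  have "finite V" using assms(1) by (rule connected_graph_finite)
  obtain u v ys where ys: "shortest_path V E u ys v" "length ys = Suc (diam V E)"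
      "internal ys \<inter> X = {}"
    using total_mutual_visibility_set_avoids_diametral_path[OF assms] by blast
  have "X \<subseteq> V" using assms(2) by (simp add: total_mutual_visibility_set_def)
  show ?thesis
  proof (cases "diam V E = 0")
    case True
    then show ?thesis using card_mono[OF \<open>finite V\<close> \<open>X \<subseteq> V\<close>] by simp
  next
    case False
    have "card X \<le> card (V - internal ys)"
      using ys(3) \<open>X \<subseteq> V\<close> \<open>finite V\<close> by (intro card_mono) auto
    then show ?thesis
      using card_Diff_internal_shortest_path[OF ys(1) \<open>finite V\<close>] ys(2) False by simp
  qed
qed

lemma mu_t_le:
  "connected_graph V E \<Longrightarrow> mu_t V E + diam V E \<le> card V + 1"
  using mu_t_attained card_total_mutual_visibility_set_le by metis

lemma card_Diff_internal_diametral_path: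
  assumes "connected_graph V E" "2 \<le> card V"
    and "shortest_path V E u xs v" "length xs = Suc (diam V E)"
  shows "card (V - internal xs) = card V - diam V E + 1"
proof -
  have "finite V" using assms(1) by (rule connected_graph_finite)
  have "card (V - internal xs) + Suc (diam V E) = card V + 2"
    using card_Diff_internal_shortest_path[OF assms(3) \<open>finite V\<close>] assms(4)
      diam_pos[OF assms(1,2)] by simp
  then show ?thesis
    using diam_less_card[OF assms(1)] by arith
qed

lemma extremal_total_mutual_visibility_set_eq_Diff_internal:
  assumes "connected_graph V E" "2 \<le> card V"
    and "total_mutual_visibility_set V E X" "card X = card V - diam V E + 1"
  shows "\<exists>u v xs. shortest_path V E u xs v \<and> length xs = Suc (diam V E) \<and> X = V - internal xs"
proof -
  obtain u v xs where xs: "shortest_path V E u xs v" "length xs = Suc (diam V E)"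
    "internal xs \<inter> X = {}"
    using total_mutual_visibility_set_avoids_diametral_path[OF assms(1,3)] by blast
  have "X \<subseteq> V - internal xs"
    using assms(3) xs(3) by (auto simp: total_mutual_visibility_set_def)
  moreover have "card X = card (V - internal xs)"
    using assms(4) card_Diff_internal_diametral_path[OF assms(1,2) xs(1,2)] by simp
  ultimately have "X = V - internal xs"
    by (rule card_subset_eq[OF finite_Diff[OF connected_graph_finite[OF assms(1)]]])
  then show ?thesis using xs(1,2) by blast
qed

theorem proposition2p2:
  fixes V :: "'a set" and E :: "'a \<Rightarrow> 'a \<Rightarrow> bool"
  assumes "connected_graph V E"
    and "card V \<ge> 2"
  shows "mu_t V E = card V - diam V E + 1 \<longleftrightarrow>
    (\<exists>xs. shortest_path V E (hd xs) xs (last xs) \<and> length xs = Suc (diam V E) \<and>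
       (\<forall>u\<in>V. \<forall>v\<in>V. \<exists>ys. shortest_path V E u ys v \<and> internal ys \<subseteq> internal xs))"
    (is "_ = ?bound \<longleftrightarrow> (\<exists>xs. ?diametral xs \<and> ?covers xs)")
proof
  assume "mu_t V E = ?bound"
  then obtain X where "total_mutual_visibility_set V E X" "card X = ?bound"
    using mu_t_attained[OF assms(1)] by auto
  then obtain u v xs where xs: "shortest_path V E u xs v" "length xs = Suc (diam V E)"
    and "total_mutual_visibility_set V E (V - internal xs)"
    using extremal_total_mutual_visibility_set_eq_Diff_internal[OF assms] by blast
  then have "?covers xs"
    by (simp add: total_mutual_visibility_set_Diff_iff)
  moreover have "?diametral xs"
    using xs by (auto simp: shortest_path_def walk_betw_def)
  ultimately show "\<exists>xs. ?diametral xs \<and> ?covers xs" by blast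
next
  assume "\<exists>xs. ?diametral xs \<and> ?covers xs"
  then obtain xs where xs: "shortest_path V E (hd xs) xs (last xs)" "length xs = Suc (diam V E)"
    and "total_mutual_visibility_set V E (V - internal xs)"
    unfolding total_mutual_visibility_set_Diff_iff by blast
  then have "?bound \<le> mu_t V E"
    using card_le_mu_t[OF connected_graph_finite[OF assms(1)]]
      card_Diff_internal_diametral_path[OF assms xs] by metis
  then show "mu_t V E = ?bound"
    using mu_t_le[OF assms(1)] diam_less_card[OF assms(1)] by linarith
qed

end
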